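(* Let $V$ be a quasi-regular mixed lattice vector space, let $A$ be an ideal of $V$ and put $W=A_{sp}-A_{sp}$. Then $W$ is a quasi-ideal, and there is no ideal $B$ of $V$ with $W\subseteq B\subseteq A$ and $B\neq A$. In particular, if $W$ is an ideal then $W=A$.
   Context: A mixed lattice vector space is a real vector space $V$ with two partial orderings $\le$ (initial) and $\preceq$ (specific), each compatible with the vector space structure ($x\le y\Rightarrow x+z\le y+z$ and $\alpha x\le\alpha y$ for $\alpha\ge 0$; likewise for $\preceq$), such that for all $x,y$ the mixed lower envelope $x\curlywedge y=\max\{w: w\preceq x,\ w\le y\}$ and mixed upper envelope $x\curlyvee y=\min\{w: x\preceq w,\ y\le w\}$ exist (max/min with respect to $\le$). Let $V_p=\{x:0\le x\}$, $V_{sp}=\{x:0\preceq x\}$ and for $E\subseteq V$, $E_p=E\cap V_p$, $E_{sp}=E\cap V_{sp}$. $V$ is quasi-regular if $V_{sp}$ is closed under $\curlywedge,\curlyvee$. A mixed lattice subspace is a linear subspace closed under $\curlywedge$ and $\curlyvee$. An ideal is a mixed lattice subspace $A$ that is $(\le)$-order convex ($x\le z\le y$, $x,y\in A$ imply $z\in A$). A quasi-ideal is a mixed lattice subspace $A$ that is mixed-order convex: $y\in A$ and $0\preceq x\le y$ imply $x\in A$. *)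

theory Defs
  imports Complex_Main
begin

definition vs_order :: "('a::real_vector \<Rightarrow> 'a \<Rightarrow> bool) \<Rightarrow> bool" where
  "vs_order r \<longleftrightarrow>
     (\<forall>x. r x x) \<and> (\<forall>x y. r x y \<and> r y x \<longrightarrow> x = y) \<and>
     (\<forall>x y z. r x y \<and> r y z \<longrightarrow> r x z) \<and>
     (\<forall>x y z. r x y \<longrightarrow> r (x + z) (y + z)) \<and>
     (\<forall>x y (a::real). r x y \<and> 0 \<le> a \<longrightarrow> r (a *\<^sub>R x) (a *\<^sub>R y))"

text \<open>\<open>le\<close> is the initial order \<open>\<le>\<close>, \<open>sle\<close> the specific order \<open>\<preceq>\<close>.
  \<open>w\<close> is the mixed lower envelope of \<open>x, y\<close>: the \<open>le\<close>-maximum of \<open>{w. w \<preceq> x, w \<le> y}\<close>.\<close>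
definition is_mlower :: "('a \<Rightarrow> 'a \<Rightarrow> bool) \<Rightarrow> ('a \<Rightarrow> 'a \<Rightarrow> bool) \<Rightarrow> 'a \<Rightarrow> 'a \<Rightarrow> 'a \<Rightarrow> bool" where
  "is_mlower le sle x y w \<longleftrightarrow> sle w x \<and> le w y \<and> (\<forall>v. sle v x \<and> le v y \<longrightarrow> le v w)"

definition is_mupper :: "('a \<Rightarrow> 'a \<Rightarrow> bool) \<Rightarrow> ('a \<Rightarrow> 'a \<Rightarrow> bool) \<Rightarrow> 'a \<Rightarrow> 'a \<Rightarrow> 'a \<Rightarrow> bool" where
  "is_mupper le sle x y w \<longleftrightarrow> sle x w \<and> le y w \<and> (\<forall>v. sle x v \<and> le y v \<longrightarrow> le w v)"

definition mlower :: "('a \<Rightarrow> 'a \<Rightarrow> bool) \<Rightarrow> ('a \<Rightarrow> 'a \<Rightarrow> bool) \<Rightarrow> 'a \<Rightarrow> 'a \<Rightarrow> 'a" where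
  "mlower le sle x y = (THE w. is_mlower le sle x y w)"

definition mupper :: "('a \<Rightarrow> 'a \<Rightarrow> bool) \<Rightarrow> ('a \<Rightarrow> 'a \<Rightarrow> bool) \<Rightarrow> 'a \<Rightarrow> 'a \<Rightarrow> 'a" where
  "mupper le sle x y = (THE w. is_mupper le sle x y w)"

definition mixed_lattice_vs :: "('a::real_vector \<Rightarrow> 'a \<Rightarrow> bool) \<Rightarrow> ('a \<Rightarrow> 'a \<Rightarrow> bool) \<Rightarrow> bool" where
  "mixed_lattice_vs le sle \<longleftrightarrow> vs_order le \<and> vs_order sle \<and>
     (\<forall>x y. \<exists>w. is_mlower le sle x y w) \<and> (\<forall>x y. \<exists>w. is_mupper le sle x y w)"

definition quasi_regular :: "('a::real_vector \<Rightarrow> 'a \<Rightarrow> bool) \<Rightarrow> ('a \<Rightarrow> 'a \<Rightarrow> bool) \<Rightarrow> bool" where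
  "quasi_regular le sle \<longleftrightarrow>
     (\<forall>x y. sle 0 x \<and> sle 0 y \<longrightarrow> sle 0 (mlower le sle x y) \<and> sle 0 (mupper le sle x y))"

definition mixed_lattice_subspace :: "('a::real_vector \<Rightarrow> 'a \<Rightarrow> bool) \<Rightarrow> ('a \<Rightarrow> 'a \<Rightarrow> bool) \<Rightarrow> 'a set \<Rightarrow> bool" where
  "mixed_lattice_subspace le sle A \<longleftrightarrow> subspace A \<and>
     (\<forall>x\<in>A. \<forall>y\<in>A. mlower le sle x y \<in> A \<and> mupper le sle x y \<in> A)"

definition ml_ideal :: "('a::real_vector \<Rightarrow> 'a \<Rightarrow> bool) \<Rightarrow> ('a \<Rightarrow> 'a \<Rightarrow> bool) \<Rightarrow> 'a set \<Rightarrow> bool" where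
  "ml_ideal le sle A \<longleftrightarrow> mixed_lattice_subspace le sle A \<and>
     (\<forall>x y z. x \<in> A \<and> y \<in> A \<and> le x z \<and> le z y \<longrightarrow> z \<in> A)"

definition ml_quasi_ideal :: "('a::real_vector \<Rightarrow> 'a \<Rightarrow> bool) \<Rightarrow> ('a \<Rightarrow> 'a \<Rightarrow> bool) \<Rightarrow> 'a set \<Rightarrow> bool" where
  "ml_quasi_ideal le sle A \<longleftrightarrow> mixed_lattice_subspace le sle A \<and>
     (\<forall>x y. y \<in> A \<and> sle 0 x \<and> le x y \<longrightarrow> x \<in> A)"

definition sp_part :: "('a::real_vector \<Rightarrow> 'a \<Rightarrow> bool) \<Rightarrow> 'a set \<Rightarrow> 'a set" where
  "sp_part sle E = {x \<in> E. sle 0 x}"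

end

theory Submission
  imports Defs
begin

text \<open>Both mixed envelopes commute with translations, and quasi-regularity makes \<open>A\<^sub>s\<^sub>p\<close>
  closed under them; writing elements of \<open>W = A\<^sub>s\<^sub>p - A\<^sub>s\<^sub>p\<close> with a common shift therefore
  shows that \<open>W\<close> is a mixed lattice subspace. Quasi-regularity also gives \<open>V\<^sub>s\<^sub>p \<subseteq> V\<^sub>p\<close>, so
  \<open>0 \<preceq> x \<le> w \<in> W\<close> puts \<open>x\<close> into \<open>A\<close> by order convexity, hence into \<open>A\<^sub>s\<^sub>p \<subseteq> W\<close>.
  For maximality, every \<open>a \<in> A\<close> satisfies \<open>0 \<curlywedge> a \<le> a \<le> 0 \<curlyvee> a\<close> where \<open>0 \<curlyvee> a\<close> and
  \<open>-(0 \<curlywedge> a)\<close> lie in \<open>A\<^sub>s\<^sub>p\<close>, so an order convex \<open>B \<supseteq> W\<close> already contains \<open>A\<close>.\<close>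

lemma vs_orderD:
  assumes "vs_order r"
  shows "r x x" "r x y \<Longrightarrow> r y x \<Longrightarrow> x = y" "r x y \<Longrightarrow> r y z \<Longrightarrow> r x z"
    "r x y \<Longrightarrow> r (x + z) (y + z)" "r x y \<Longrightarrow> 0 \<le> a \<Longrightarrow> r (a *\<^sub>R x) (a *\<^sub>R y)"
  using assms unfolding vs_order_def by blast+

lemma vs_order_add_right_iff:
  assumes "vs_order r"
  shows "r (x + z) (y + z) \<longleftrightarrow> r x y"
  using vs_orderD(4)[OF assms, of x y z] vs_orderD(4)[OF assms, of "x + z" "y + z" "- z"] by auto

lemma vs_order_nonneg_add:
  assumes "vs_order r" "r 0 x" "r 0 y"
  shows "r 0 (x + y)"
proof -
  have "r y (x + y)"
    using vs_orderD(4)[OF assms(1,2), of y] by simp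
  then show ?thesis
    using vs_orderD(3)[OF assms(1) assms(3)] by blast
qed

lemma vs_order_nonpos_imp_neg_nonneg:
  assumes "vs_order r" "r x 0"
  shows "r 0 (- x)"
  using vs_order_add_right_iff[OF assms(1), of x "- x" 0] assms(2) by simp

lemma is_mlower_translate:
  assumes "vs_order le" "vs_order sle"
  shows "is_mlower le sle (x + z) (y + z) (w + z) \<longleftrightarrow> is_mlower le sle x y w"
proof -
  have "(\<forall>v. sle v (x + z) \<and> le v (y + z) \<longrightarrow> le v (w + z)) \<longleftrightarrow>
        (\<forall>v. sle (v + z) (x + z) \<and> le (v + z) (y + z) \<longrightarrow> le (v + z) (w + z))"
    by (metis diff_add_cancel)
  then show ?thesis
    unfolding is_mlower_def by (simp add: vs_order_add_right_iff assms)
qed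

lemma is_mupper_translate:
  assumes "vs_order le" "vs_order sle"
  shows "is_mupper le sle (x + z) (y + z) (w + z) \<longleftrightarrow> is_mupper le sle x y w"
proof -
  have "(\<forall>v. sle (x + z) v \<and> le (y + z) v \<longrightarrow> le (w + z) v) \<longleftrightarrow>
        (\<forall>v. sle (x + z) (v + z) \<and> le (y + z) (v + z) \<longrightarrow> le (w + z) (v + z))"
    by (metis diff_add_cancel)
  then show ?thesis
    unfolding is_mupper_def by (simp add: vs_order_add_right_iff assms)
qed

definition sp_diffs :: "('a::real_vector \<Rightarrow> 'a \<Rightarrow> bool) \<Rightarrow> 'a set \<Rightarrow> 'a set" where
  "sp_diffs sle A = {x - y | x y. x \<in> sp_part sle A \<and> y \<in> sp_part sle A}"

locale mixed_lattice =
  fixes le sle :: "'a::real_vector \<Rightarrow> 'a \<Rightarrow> bool"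
  assumes mixed_lattice_vs: "mixed_lattice_vs le sle"
begin

lemma vs_order_le: "vs_order le" and vs_order_sle: "vs_order sle"
  using mixed_lattice_vs unfolding mixed_lattice_vs_def by blast+

lemma mlower_eqI:
  assumes "is_mlower le sle x y w"
  shows "mlower le sle x y = w"
  unfolding mlower_def
proof (rule the_equality)
  fix w' assume "is_mlower le sle x y w'"
  with assms show "w' = w"
    using vs_orderD(2)[OF vs_order_le] unfolding is_mlower_def by blast
qed (fact assms)

lemma mupper_eqI:
  assumes "is_mupper le sle x y w"
  shows "mupper le sle x y = w"
  unfolding mupper_def
proof (rule the_equality)
  fix w' assume "is_mupper le sle x y w'"
  with assms show "w' = w"
    using vs_orderD(2)[OF vs_order_le] unfolding is_mupper_def by blast
qed (fact assms)

lemma is_mlower_mlower: "is_mlower le sle x y (mlower le sle x y)"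
  using mixed_lattice_vs mlower_eqI unfolding mixed_lattice_vs_def by metis

lemma is_mupper_mupper: "is_mupper le sle x y (mupper le sle x y)"
  using mixed_lattice_vs mupper_eqI unfolding mixed_lattice_vs_def by metis

lemma mlower_translate: "mlower le sle (x + z) (y + z) = mlower le sle x y + z"
  by (rule mlower_eqI)
    (simp add: is_mlower_translate vs_order_le vs_order_sle is_mlower_mlower)

lemma mupper_translate: "mupper le sle (x + z) (y + z) = mupper le sle x y + z"
  by (rule mupper_eqI)
    (simp add: is_mupper_translate vs_order_le vs_order_sle is_mupper_mupper)

text \<open>The lower envelope of \<open>0\<close> and \<open>x \<succeq> 0\<close> is both \<open>\<preceq> 0\<close> and \<open>\<succeq> 0\<close>, hence \<open>0\<close>,
  and it is \<open>\<le> x\<close>.\<close>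
lemma quasi_regular_sle_imp_le:
  assumes "quasi_regular le sle" "sle 0 x"
  shows "le 0 x"
proof -
  let ?m = "mlower le sle 0 x"
  have "sle 0 ?m"
    using assms vs_orderD(1)[OF vs_order_sle] unfolding quasi_regular_def by blast
  moreover have "sle ?m 0" and "le ?m x"
    using is_mlower_mlower unfolding is_mlower_def by blast+
  ultimately show ?thesis
    using vs_orderD(2)[OF vs_order_sle] by metis
qed

lemma sp_part_add:
  assumes "subspace A" "x \<in> sp_part sle A" "y \<in> sp_part sle A"
  shows "x + y \<in> sp_part sle A"
  using assms subspace_add vs_order_nonneg_add[OF vs_order_sle] unfolding sp_part_def by blast

lemma sp_part_scale:
  assumes "subspace A" "x \<in> sp_part sle A" "0 \<le> t"
  shows "t *\<^sub>R x \<in> sp_part sle A"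
  using assms subspace_scale vs_orderD(5)[OF vs_order_sle, of 0 x t] unfolding sp_part_def by auto

lemma zero_in_sp_part: "subspace A \<Longrightarrow> 0 \<in> sp_part sle A"
  using subspace_0 vs_orderD(1)[OF vs_order_sle] unfolding sp_part_def by blast

lemma sp_part_subset_sp_diffs:
  assumes "subspace A"
  shows "sp_part sle A \<subseteq> sp_diffs sle A"
proof
  fix x assume "x \<in> sp_part sle A"
  then have "x - 0 \<in> sp_diffs sle A"
    using zero_in_sp_part[OF assms] unfolding sp_diffs_def by blast
  then show "x \<in> sp_diffs sle A" by simp
qed

lemma sp_diffs_subset:
  assumes "subspace A"
  shows "sp_diffs sle A \<subseteq> A"
  using subspace_diff[OF assms] unfolding sp_diffs_def sp_part_def by blast

lemma subspace_sp_diffs: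
  assumes "subspace A"
  shows "subspace (sp_diffs sle A)"
  unfolding subspace_def
proof (intro conjI ballI allI)
  show "0 \<in> sp_diffs sle A"
    using sp_part_subset_sp_diffs[OF assms] zero_in_sp_part[OF assms] by blast
next
  fix x y assume "x \<in> sp_diffs sle A" "y \<in> sp_diffs sle A"
  then obtain a b c d where "x = a - b" "y = c - d"
    and "a \<in> sp_part sle A" "b \<in> sp_part sle A" "c \<in> sp_part sle A" "d \<in> sp_part sle A"
    unfolding sp_diffs_def by blast
  moreover have "x + y = (a + c) - (b + d)"
    using \<open>x = a - b\<close> \<open>y = c - d\<close> by (simp add: algebra_simps)
  ultimately show "x + y \<in> sp_diffs sle A"
    using sp_part_add[OF assms] unfolding sp_diffs_def by blast
next
  fix t :: real and x assume "x \<in> sp_diffs sle A"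
  then obtain a b where x: "x = a - b" and ab: "a \<in> sp_part sle A" "b \<in> sp_part sle A"
    unfolding sp_diffs_def by blast
  show "t *\<^sub>R x \<in> sp_diffs sle A"
  proof (cases "0 \<le> t")
    case True
    then have "t *\<^sub>R a - t *\<^sub>R b \<in> sp_diffs sle A"
      using ab sp_part_scale[OF assms] unfolding sp_diffs_def by blast
    then show ?thesis by (simp add: x scaleR_diff_right)
  next
    case False
    have "(- t) *\<^sub>R a \<in> sp_part sle A" "(- t) *\<^sub>R b \<in> sp_part sle A"
      using False sp_part_scale[OF assms ab(1), of "- t"] sp_part_scale[OF assms ab(2), of "- t"]
      by simp_all
    then have "(- t) *\<^sub>R b - (- t) *\<^sub>R a \<in> sp_diffs sle A"
      unfolding sp_diffs_def by blast
    then show ?thesis by (simp add: x scaleR_diff_right)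
  qed
qed

text \<open>Shifting \<open>a - b\<close> and \<open>c - d\<close> by \<open>b + d\<close> moves them into \<open>A\<^sub>s\<^sub>p\<close>.\<close>
lemma sp_diffs_closed_translation_invariant:
  assumes "subspace A"
    and translate: "\<And>x y z. f (x + z) (y + z) = f x y + z"
    and closed: "\<And>p q. p \<in> sp_part sle A \<Longrightarrow> q \<in> sp_part sle A \<Longrightarrow> f p q \<in> sp_part sle A"
    and "x \<in> sp_diffs sle A" "y \<in> sp_diffs sle A"
  shows "f x y \<in> sp_diffs sle A"
proof -
  obtain a b c d where "x = a - b" "y = c - d"
    and sp: "a \<in> sp_part sle A" "b \<in> sp_part sle A" "c \<in> sp_part sle A" "d \<in> sp_part sle A"
    using assms(4,5) unfolding sp_diffs_def by blast
  then have shift: "x + (b + d) = a + d" "y + (b + d) = c + b"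
    by (simp_all add: algebra_simps)
  have "f (a + d) (c + b) = f x y + (b + d)"
    using translate[of x "b + d" y] unfolding shift .
  then have "f x y = f (a + d) (c + b) - (b + d)"
    by (simp add: eq_diff_eq)
  moreover have "f (a + d) (c + b) \<in> sp_part sle A" "b + d \<in> sp_part sle A"
    using sp closed sp_part_add[OF assms(1)] by blast+
  ultimately show ?thesis
    unfolding sp_diffs_def by blast
qed

lemma mixed_lattice_subspace_sp_diffs:
  assumes "quasi_regular le sle" "mixed_lattice_subspace le sle A"
  shows "mixed_lattice_subspace le sle (sp_diffs sle A)"
proof -
  have A: "subspace A" "\<And>x y. x \<in> A \<Longrightarrow> y \<in> A \<Longrightarrow> mlower le sle x y \<in> A \<and> mupper le sle x y \<in> A"
    using assms(2) unfolding mixed_lattice_subspace_def by blast+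
  have "mlower le sle p q \<in> sp_part sle A \<and> mupper le sle p q \<in> sp_part sle A"
    if "p \<in> sp_part sle A" "q \<in> sp_part sle A" for p q
    using that A(2) assms(1) unfolding sp_part_def quasi_regular_def by blast
  then show ?thesis
    unfolding mixed_lattice_subspace_def
    using subspace_sp_diffs[OF A(1)] mlower_translate mupper_translate
      sp_diffs_closed_translation_invariant[OF A(1)] by blast
qed

lemma ml_quasi_ideal_sp_diffs:
  assumes "quasi_regular le sle" "ml_ideal le sle A"
  shows "ml_quasi_ideal le sle (sp_diffs sle A)"
proof -
  have A: "mixed_lattice_subspace le sle A" "subspace A"
    using assms(2) unfolding ml_ideal_def mixed_lattice_subspace_def by blast+
  have "x \<in> sp_diffs sle A" if "y \<in> sp_diffs sle A" "sle 0 x" "le x y" for x y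
  proof -
    have "le 0 x" using quasi_regular_sle_imp_le[OF assms(1) \<open>sle 0 x\<close>] .
    then have "x \<in> A"
      using assms(2) that sp_diffs_subset[OF A(2)] subspace_0[OF A(2)] unfolding ml_ideal_def by blast
    then show ?thesis
      using \<open>sle 0 x\<close> sp_part_subset_sp_diffs[OF A(2)] unfolding sp_part_def by blast
  qed
  then show ?thesis
    unfolding ml_quasi_ideal_def using mixed_lattice_subspace_sp_diffs[OF assms(1) A(1)] by blast
qed

lemma sp_diffs_bracket:
  assumes "mixed_lattice_subspace le sle A" "a \<in> A"
  obtains v u where "v \<in> sp_diffs sle A" "u \<in> sp_diffs sle A" "le v a" "le a u"
proof -
  let ?v = "mlower le sle 0 a" and ?u = "mupper le sle 0 a"
  have A: "subspace A" "?v \<in> A" "?u \<in> A"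
    using assms subspace_0 unfolding mixed_lattice_subspace_def by blast+
  have v: "sle ?v 0" "le ?v a" and u: "sle 0 ?u" "le a ?u"
    using is_mlower_mlower is_mupper_mupper unfolding is_mlower_def is_mupper_def by blast+
  have "- ?v \<in> sp_part sle A"
    using A subspace_neg vs_order_nonpos_imp_neg_nonneg[OF vs_order_sle v(1)]
    unfolding sp_part_def by blast
  then have "0 - (- ?v) \<in> sp_diffs sle A"
    using zero_in_sp_part[OF A(1)] unfolding sp_diffs_def by blast
  then have "?v \<in> sp_diffs sle A" by simp
  moreover have "?u \<in> sp_diffs sle A"
    using A u(1) sp_part_subset_sp_diffs unfolding sp_part_def by blast
  ultimately show thesis
    using that v(2) u(2) by blast
qed

lemma sp_diffs_subset_ml_ideal_imp_subset:
  assumes "mixed_lattice_subspace le sle A" "ml_ideal le sle B" "sp_diffs sle A \<subseteq> B"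
  shows "A \<subseteq> B"
proof
  fix a assume "a \<in> A"
  then obtain v u where "v \<in> B" "u \<in> B" "le v a" "le a u"
    using sp_diffs_bracket[OF assms(1)] assms(3) by (metis subsetD)
  then show "a \<in> B"
    using assms(2) unfolding ml_ideal_def by blast
qed

end

theorem theorem4p12:
  fixes le sle :: "'a::real_vector \<Rightarrow> 'a \<Rightarrow> bool" and A :: "'a set"
  assumes "mixed_lattice_vs le sle"
    and "quasi_regular le sle"
    and "ml_ideal le sle A"
  defines "W \<equiv> {x - y | x y. x \<in> sp_part sle A \<and> y \<in> sp_part sle A}"
  shows "ml_quasi_ideal le sle W
    \<and> \<not> (\<exists>B. ml_ideal le sle B \<and> W \<subseteq> B \<and> B \<subseteq> A \<and> B \<noteq> A)
    \<and> (ml_ideal le sle W \<longrightarrow> W = A)"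
proof -
  interpret mixed_lattice le sle by (rule mixed_lattice.intro[OF assms(1)])
  have W: "W = sp_diffs sle A"
    unfolding W_def sp_diffs_def ..
  have A: "mixed_lattice_subspace le sle A" "subspace A"
    using assms(3) unfolding ml_ideal_def mixed_lattice_subspace_def by blast+
  have maximal: "B = A" if "ml_ideal le sle B" "W \<subseteq> B" "B \<subseteq> A" for B
    using sp_diffs_subset_ml_ideal_imp_subset[OF A(1) that(1)] that(2,3) W by blast
  show ?thesis
    using ml_quasi_ideal_sp_diffs[OF assms(2,3)] maximal sp_diffs_subset[OF A(2)] W by blast
qed

end
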